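(* Let $\Omega\subset\mathbb{R}^d$ be compact and let $\Phi\in C(\Omega\times\Omega)$ be a symmetric positive definite kernel whose reproducing kernel Hilbert space $\mathcal{N}_\Phi(\Omega)$ is dense in $L_2(\Omega)$. Let $\omega_{\tau_1},\dots,\omega_{\tau_n}\subseteq\Omega$ be Lebesgue measurable sets of positive measure whose characteristic functions $\chi_{\omega_{\tau_1}},\dots,\chi_{\omega_{\tau_n}}$ are linearly independent in $L_2(\Omega)$. Then the matrix $\mathbf{K}\in\mathbb{R}^{n\times n}$ with entries \[\mathbf{K}_{i,j}=\frac{1}{|\omega_{\tau_i}|}\frac{1}{|\omega_{\tau_j}|}\int_{\omega_{\tau_i}}\int_{\omega_{\tau_j}}\Phi(x,y)\,\mathrm{d}x\,\mathrm{d}y\] is symmetric and positive definite, and in particular invertible.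
   Context: $|\omega|$ denotes Lebesgue measure and $\chi_\omega$ the indicator function of $\omega$. A kernel $\Phi$ is positive definite if for all distinct $x_1,\dots,x_m$ the matrix $(\Phi(x_k,x_\ell))_{k,\ell}$ is positive definite. *)

theory Defs
  imports "HOL-Analysis.Analysis"
begin

text \<open>Finitely supported coefficient functions with centres in \<Omega>:
  they encode finite kernel expansions  sum_y c(y) Phi(., y).\<close>
definition fin_coeff :: "'a set \<Rightarrow> ('a \<Rightarrow> real) \<Rightarrow> bool" where
  "fin_coeff \<Omega> c \<longleftrightarrow> finite {x. c x \<noteq> 0} \<and> {x. c x \<noteq> 0} \<subseteq> \<Omega>"

definition kernel_fun :: "('a \<Rightarrow> 'a \<Rightarrow> real) \<Rightarrow> ('a \<Rightarrow> real) \<Rightarrow> 'a \<Rightarrow> real" where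
  "kernel_fun \<Phi> c = (\<lambda>x. \<Sum>y\<in>{y. c y \<noteq> 0}. c y * \<Phi> x y)"

definition kernel_norm2 :: "('a \<Rightarrow> 'a \<Rightarrow> real) \<Rightarrow> ('a \<Rightarrow> real) \<Rightarrow> real" where
  "kernel_norm2 \<Phi> c = (\<Sum>x\<in>{x. c x \<noteq> 0}. \<Sum>y\<in>{y. c y \<noteq> 0}. c x * c y * \<Phi> x y)"

definition pd_kernel :: "'a set \<Rightarrow> ('a \<Rightarrow> 'a \<Rightarrow> real) \<Rightarrow> bool" where
  "pd_kernel \<Omega> \<Phi> \<longleftrightarrow> (\<forall>X c. finite X \<and> X \<subseteq> \<Omega> \<and> (\<exists>x\<in>X. c x \<noteq> 0) \<longrightarrow>
      (\<Sum>x\<in>X. \<Sum>y\<in>X. c x * c y * \<Phi> x y) > 0)"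

text \<open>Native space (RKHS) N_Phi(\<Omega>): completion of the span of the kernel
  translates, realised as pointwise limits on \<Omega> of native-norm Cauchy
  sequences of finite kernel expansions.\<close>
definition native_space :: "'a set \<Rightarrow> ('a \<Rightarrow> 'a \<Rightarrow> real) \<Rightarrow> ('a \<Rightarrow> real) set" where
  "native_space \<Omega> \<Phi> = {f. \<exists>s. (\<forall>m. fin_coeff \<Omega> (s m)) \<and>
      (\<forall>\<epsilon>>0. \<exists>N. \<forall>m\<ge>N. \<forall>k\<ge>N. kernel_norm2 \<Phi> (\<lambda>x. s m x - s k x) < \<epsilon>) \<and>
      (\<forall>x\<in>\<Omega>. (\<lambda>m. kernel_fun \<Phi> (s m) x) \<longlonglongrightarrow> f x)}"

definition dense_in_L2 :: "('a::euclidean_space) set \<Rightarrow> ('a \<Rightarrow> real) set \<Rightarrow> bool" where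
  "dense_in_L2 \<Omega> F \<longleftrightarrow> (\<forall>f \<in> borel_measurable lebesgue.
      (\<integral>\<^sup>+x\<in>\<Omega>. ennreal ((f x)\<^sup>2) \<partial>lebesgue) < \<infinity> \<longrightarrow>
      (\<forall>\<epsilon>>0. \<exists>g\<in>F. (\<integral>\<^sup>+x\<in>\<Omega>. ennreal ((f x - g x)\<^sup>2) \<partial>lebesgue) < ennreal \<epsilon>))"

definition indicators_lin_indep_L2 :: "('a::euclidean_space) set \<Rightarrow> ('n::finite \<Rightarrow> 'a set) \<Rightarrow> bool" where
  "indicators_lin_indep_L2 \<Omega> \<omega> \<longleftrightarrow> (\<forall>c::'n \<Rightarrow> real.
      (AE x in lebesgue. x \<in> \<Omega> \<longrightarrow> (\<Sum>i\<in>UNIV. c i * indicator (\<omega> i) x) = 0) \<longrightarrow> (\<forall>i. c i = 0))"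

definition Kmat :: "('a::euclidean_space \<Rightarrow> 'a \<Rightarrow> real) \<Rightarrow> ('n::finite \<Rightarrow> 'a set) \<Rightarrow> real^'n^'n" where
  "Kmat \<Phi> \<omega> = (\<chi> i j. 1 / measure lebesgue (\<omega> i) * (1 / measure lebesgue (\<omega> j)) *
      (LINT x:\<omega> i|lebesgue. (LINT y:\<omega> j|lebesgue. \<Phi> x y)))"

definition pos_def_matrix :: "real^'n^'n \<Rightarrow> bool" where
  "pos_def_matrix A \<longleftrightarrow> (\<forall>v. v \<noteq> 0 \<longrightarrow> v \<bullet> (A *v v) > 0)"

end

(*
  For v in R^n, v \<bullet> K v is the energy Q(g) = \<integral>\<integral> g(x) g(y) \<Phi>(x,y) dx dy of the step
  function g = \<Sum>_i v_i / |\<omega>_i| \<chi>_{\<omega>_i}, a bounded measurable function vanishing outside \<Omega>.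

  Rounding both arguments of \<Phi> to a fine finite net of \<Omega> turns Q(g) and the potentials
  \<integral> g(x) \<Phi>(x,y) dx into finite sums; positive definiteness, applied jointly to the net and
  to the centres of a kernel expansion \<Sum>_y c_y \<Phi>(.,y), and uniform continuity give
     Q(g) + 2 \<Sum>_y c_y \<integral> g(x) \<Phi>(x,y) dx + \<parallel>\<Sum>_y c_y \<Phi>(.,y)\<parallel>\<^sup>2 \<ge> 0.
  Hence Q(g) \<ge> 0, and if Q(g) = 0 every potential of g vanishes on \<Omega>, so g is orthogonal
  to all kernel expansions and, by dominated convergence, to the native space.  Density of
  the native space in L_2 then forces g = 0 a.e., and linear independence of the
  indicators gives v = 0.
*)
theory Submission
  imports Defs
begin

lemma sigma_finite_lebesgue: "sigma_finite_measure (lebesgue :: 'a::euclidean_space measure)"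
proof -
  obtain A :: "'a set set" where A: "countable A" "A \<subseteq> sets lborel" "\<Union>A = space lborel"
      "\<forall>a\<in>A. emeasure lborel a \<noteq> \<infinity>"
    using lborel.sigma_finite_countable by blast
  then show ?thesis
    by unfold_locales (auto intro!: exI[of _ A])
qed

interpretation lebesgue: sigma_finite_measure "lebesgue :: 'a::euclidean_space measure"
  by (rule sigma_finite_lebesgue)

interpretation lebesgue_pair: pair_sigma_finite "lebesgue :: 'a::euclidean_space measure" lebesgue ..

lemma borel_measurable_lebesgue_pair:
  fixes f :: "'a::euclidean_space \<times> 'a \<Rightarrow> real"
  assumes "f \<in> borel_measurable borel"
  shows "f \<in> borel_measurable (lebesgue \<Otimes>\<^sub>M lebesgue)"
proof -
  have id: "(\<lambda>x. x) \<in> (lebesgue :: 'a measure) \<rightarrow>\<^sub>M lborel"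
    by (rule measurable_completion) simp
  have "fst \<in> lebesgue \<Otimes>\<^sub>M (lebesgue :: 'a measure) \<rightarrow>\<^sub>M (lborel :: 'a measure)"
    "snd \<in> (lebesgue :: 'a measure) \<Otimes>\<^sub>M lebesgue \<rightarrow>\<^sub>M (lborel :: 'a measure)"
    by (rule measurable_compose[OF measurable_fst id] measurable_compose[OF measurable_snd id])+
  then have "(\<lambda>z. (fst z, snd z)) \<in> lebesgue \<Otimes>\<^sub>M lebesgue \<rightarrow>\<^sub>M (lborel \<Otimes>\<^sub>M lborel :: ('a \<times> 'a) measure)"
    by (rule measurable_Pair)
  then have "(\<lambda>z. z) \<in> lebesgue \<Otimes>\<^sub>M lebesgue \<rightarrow>\<^sub>M (lborel :: ('a \<times> 'a) measure)"
    by (simp add: lborel_prod)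
  then have "(\<lambda>z. z) \<in> lebesgue \<Otimes>\<^sub>M lebesgue \<rightarrow>\<^sub>M (borel :: ('a \<times> 'a) measure)"
    by (simp add: measurable_lborel1 cong: measurable_cong_sets)
  from measurable_compose[OF this assms] show ?thesis by simp
qed

lemma sum_of_bool_delta:
  fixes f :: "nat \<Rightarrow> real"
  shows "i < n \<Longrightarrow> (\<Sum>k<n. of_bool (i = k) * f k) = f i"
  by (simp add: sum.delta)

lemma linear_term_zero_if_quadratic_nonneg:
  fixes a b :: real
  assumes "\<And>t. 0 \<le> 2 * t * b + t * t * a"
  shows "b = 0"
proof -
  define s where "s = \<bar>a\<bar> + 1"
  have "s > 0" "a - 2 * s < 0" unfolding s_def by (simp_all add: abs_if)
  have "0 \<le> s * s * (2 * (- b / s) * b + (- b / s) * (- b / s) * a)"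
    using assms[of "- b / s"] by simp
  also have "\<dots> = b * b * (a - 2 * s)"
    using \<open>s > 0\<close> by (simp add: field_simps)
  finally have "0 \<le> b * b * (a - 2 * s)" .
  moreover note \<open>a - 2 * s < 0\<close>
  ultimately have "b * b \<le> 0" by (simp add: zero_le_mult_iff)
  then show "b = 0" by (metis mult_eq_0_iff order_antisym zero_le_square)
qed

lemma pos_def_matrix_invertible:
  fixes A :: "real^'n^'n"
  assumes "pos_def_matrix A"
  shows "invertible A"
proof -
  have "x = 0" if "A *v x = 0" for x
    using assms that unfolding pos_def_matrix_def by force
  then show ?thesis unfolding invertible_left_inverse matrix_left_invertible_ker by blast
qed

section \<open>Positive definite kernels on finite point sets\<close>

lemma pd_kernel_sum_nonneg:
  fixes w :: "'i \<Rightarrow> real"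
  assumes pd: "pd_kernel \<Omega> \<Phi>" and I: "finite I" and z: "z ` I \<subseteq> \<Omega>"
  shows "0 \<le> (\<Sum>i\<in>I. \<Sum>j\<in>I. w i * w j * \<Phi> (z i) (z j))"
proof -
  define c where "c p = (\<Sum>i\<in>{i\<in>I. z i = p}. w i)" for p
  have collect: "(\<Sum>i\<in>I. w i * F (z i)) = (\<Sum>p\<in>z ` I. c p * F p)" for F :: "'a \<Rightarrow> real"
    unfolding c_def sum_distrib_right using I
    by (subst sum.image_gen[of I]) (auto intro!: sum.cong)
  have "(\<Sum>i\<in>I. \<Sum>j\<in>I. w i * w j * \<Phi> (z i) (z j)) = (\<Sum>i\<in>I. w i * (\<Sum>j\<in>I. w j * \<Phi> (z i) (z j)))"
    by (simp add: sum_distrib_left mult.assoc)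
  also have "\<dots> = (\<Sum>i\<in>I. w i * (\<Sum>q\<in>z ` I. c q * \<Phi> (z i) q))"
    by (simp only: collect)
  also have "\<dots> = (\<Sum>p\<in>z ` I. c p * (\<Sum>q\<in>z ` I. c q * \<Phi> p q))"
    by (rule collect)
  also have "\<dots> = (\<Sum>p\<in>z ` I. \<Sum>q\<in>z ` I. c p * c q * \<Phi> p q)"
    by (simp add: sum_distrib_left mult.assoc)
  finally have eq: "(\<Sum>i\<in>I. \<Sum>j\<in>I. w i * w j * \<Phi> (z i) (z j)) = \<dots>" .
  show ?thesis
  proof (cases "\<exists>p\<in>z ` I. c p \<noteq> 0")
    case True
    with pd I z show ?thesis
      unfolding eq pd_kernel_def by (simp add: less_imp_le)
  qed (auto simp: eq intro!: sum_nonneg)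
qed

lemma kernel_norm2_eq_sum:
  assumes "finite X" "{x. c x \<noteq> 0} \<subseteq> X"
  shows "kernel_norm2 \<Phi> c = (\<Sum>x\<in>X. \<Sum>y\<in>X. c x * c y * \<Phi> x y)"
  unfolding kernel_norm2_def using assms
  by (subst (1 2) sum.mono_neutral_left[of X]) (auto intro: finite_subset)

lemma fin_coeff_diff:
  assumes "fin_coeff \<Omega> a" "fin_coeff \<Omega> b"
  shows "fin_coeff \<Omega> (\<lambda>x. a x - b x)"
proof -
  have "{x. a x - b x \<noteq> 0} \<subseteq> {x. a x \<noteq> 0} \<union> {x. b x \<noteq> 0}" by auto
  with assms show ?thesis unfolding fin_coeff_def by (auto intro: finite_subset)
qed

lemma kernel_norm2_add_le:
  assumes pd: "pd_kernel \<Omega> \<Phi>" and a: "fin_coeff \<Omega> a" and b: "fin_coeff \<Omega> b"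
  shows "kernel_norm2 \<Phi> (\<lambda>x. a x + b x) \<le> 2 * kernel_norm2 \<Phi> a + 2 * kernel_norm2 \<Phi> b"
proof -
  define X where "X = {x. a x \<noteq> 0} \<union> {x. b x \<noteq> 0}"
  have X: "finite X" "X \<subseteq> \<Omega>" using a b unfolding X_def fin_coeff_def by auto
  let ?q = "\<lambda>c. \<Sum>x\<in>X. \<Sum>y\<in>X. c x * c y * \<Phi> x y"
  have "?q (\<lambda>x. a x + b x) + ?q (\<lambda>x. a x - b x) = 2 * ?q a + 2 * ?q b"
    by (simp add: algebra_simps sum.distrib sum_distrib_left sum_subtractf)
  moreover have "0 \<le> ?q (\<lambda>x. a x - b x)"
    using pd_kernel_sum_nonneg[OF pd X(1), of "\<lambda>x. x"] X(2) by simp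
  moreover have "kernel_norm2 \<Phi> (\<lambda>x. a x + b x) = ?q (\<lambda>x. a x + b x)"
    "kernel_norm2 \<Phi> a = ?q a" "kernel_norm2 \<Phi> b = ?q b"
    by (rule kernel_norm2_eq_sum[OF X(1)]; force simp: X_def)+
  ultimately show ?thesis by linarith
qed

lemma kernel_norm2_Cauchy_bounded:
  fixes s :: "nat \<Rightarrow> 'a \<Rightarrow> real"
  assumes pd: "pd_kernel \<Omega> \<Phi>" and s: "\<forall>m. fin_coeff \<Omega> (s m)"
    and Cauchy: "\<forall>\<epsilon>>0. \<exists>N. \<forall>m\<ge>N. \<forall>k\<ge>N. kernel_norm2 \<Phi> (\<lambda>x. s m x - s k x) < \<epsilon>"
  obtains R where "\<And>m. kernel_norm2 \<Phi> (s m) \<le> R"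
proof -
  obtain N where N: "\<forall>m\<ge>N. \<forall>k\<ge>N. kernel_norm2 \<Phi> (\<lambda>x. s m x - s k x) < 1"
    using Cauchy by (meson zero_less_one)
  define R where "R = max (2 + 2 * kernel_norm2 \<Phi> (s N)) (Max ((\<lambda>m. kernel_norm2 \<Phi> (s m)) ` {..N}))"
  have "kernel_norm2 \<Phi> (s m) \<le> R" for m
  proof (cases "m \<le> N")
    case False
    have "kernel_norm2 \<Phi> (s m) = kernel_norm2 \<Phi> (\<lambda>x. (s m x - s N x) + s N x)" by simp
    also have "\<dots> \<le> 2 * kernel_norm2 \<Phi> (\<lambda>x. s m x - s N x) + 2 * kernel_norm2 \<Phi> (s N)"
      by (intro kernel_norm2_add_le[OF pd] fin_coeff_diff s[rule_format])
    also have "kernel_norm2 \<Phi> (\<lambda>x. s m x - s N x) < 1"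
      using N False by simp
    finally show ?thesis unfolding R_def by simp
  qed (simp add: R_def le_max_iff_disj)
  then show ?thesis using that by blast
qed

lemma pd_kernel_mixed_sum_nonneg:
  fixes G :: "'i \<Rightarrow> real"
  assumes pd: "pd_kernel \<Omega> \<Phi>" and sym: "\<forall>x\<in>\<Omega>. \<forall>y\<in>\<Omega>. \<Phi> x y = \<Phi> y x"
    and I: "finite I" "z ` I \<subseteq> \<Omega>" and c: "fin_coeff \<Omega> c"
  shows "0 \<le> (\<Sum>i\<in>I. \<Sum>j\<in>I. G i * G j * \<Phi> (z i) (z j))
    + 2 * (\<Sum>y\<in>{y. c y \<noteq> 0}. c y * (\<Sum>i\<in>I. G i * \<Phi> (z i) y)) + kernel_norm2 \<Phi> c"
proof -
  define Y where "Y = {y. c y \<noteq> 0}"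
  have Y: "finite Y" "Y \<subseteq> \<Omega>" using c unfolding Y_def fin_coeff_def by auto
  define z' where "z' = case_sum z (\<lambda>y. y)"
  define w where "w = case_sum G c"
  have "0 \<le> (\<Sum>i\<in>I <+> Y. \<Sum>j\<in>I <+> Y. w i * w j * \<Phi> (z' i) (z' j))"
    by (rule pd_kernel_sum_nonneg[OF pd]) (use I Y in \<open>auto simp: z'_def\<close>)
  also have "\<dots> = (\<Sum>i\<in>I. \<Sum>j\<in>I. G i * G j * \<Phi> (z i) (z j))
      + (\<Sum>i\<in>I. \<Sum>y\<in>Y. G i * c y * \<Phi> (z i) y) + (\<Sum>y\<in>Y. \<Sum>i\<in>I. c y * G i * \<Phi> y (z i))
      + (\<Sum>y\<in>Y. \<Sum>y'\<in>Y. c y * c y' * \<Phi> y y')"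
    using I Y by (simp add: sum.Plus sum.distrib z'_def w_def)
  also have "(\<Sum>i\<in>I. \<Sum>y\<in>Y. G i * c y * \<Phi> (z i) y) = (\<Sum>y\<in>Y. c y * (\<Sum>i\<in>I. G i * \<Phi> (z i) y))"
    by (subst sum.swap) (simp add: sum_distrib_left mult.assoc mult.left_commute)
  also have "(\<Sum>y\<in>Y. \<Sum>i\<in>I. c y * G i * \<Phi> y (z i)) = (\<Sum>y\<in>Y. c y * (\<Sum>i\<in>I. G i * \<Phi> (z i) y))"
  proof -
    have "\<Phi> y (z i) = \<Phi> (z i) y" if "y \<in> Y" "i \<in> I" for y i
      using sym I Y that by blast
    then show ?thesis by (auto simp: sum_distrib_left intro!: sum.cong)
  qed
  also have "(\<Sum>y\<in>Y. \<Sum>y'\<in>Y. c y * c y' * \<Phi> y y') = kernel_norm2 \<Phi> c"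
    unfolding kernel_norm2_def Y_def ..
  finally show ?thesis unfolding Y_def by simp
qed

lemma kernel_fun_abs_le:
  assumes pd: "pd_kernel \<Omega> \<Phi>" and sym: "\<forall>x\<in>\<Omega>. \<forall>y\<in>\<Omega>. \<Phi> x y = \<Phi> y x"
    and c: "fin_coeff \<Omega> c" and x: "x \<in> \<Omega>"
  shows "2 * \<bar>kernel_fun \<Phi> c x\<bar> \<le> kernel_norm2 \<Phi> c + \<Phi> x x"
proof -
  have "0 \<le> t * t * \<Phi> x x + 2 * t * kernel_fun \<Phi> c x + kernel_norm2 \<Phi> c" for t
    using pd_kernel_mixed_sum_nonneg[OF pd sym _ _ c, of "{x}" "\<lambda>x. x" "\<lambda>_. t"] x
    by (simp add: kernel_fun_def sum_distrib_left algebra_simps)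
  from this[of 1] this[of "-1"] show ?thesis by (simp add: abs_if)
qed

section \<open>Test functions and the kernel form\<close>

locale continuous_kernel =
  fixes \<Omega> :: "'a::euclidean_space set" and \<Phi> :: "'a \<Rightarrow> 'a \<Rightarrow> real"
  assumes compact: "compact \<Omega>"
    and continuous: "continuous_on (\<Omega> \<times> \<Omega>) (\<lambda>(x, y). \<Phi> x y)"
begin

text \<open>Unlike \<open>\<Phi>\<close>, which is only continuous on \<open>\<Omega> \<times> \<Omega>\<close>, its extension by zero is
  measurable on the whole space.\<close>
definition Phi0 :: "'a \<Rightarrow> 'a \<Rightarrow> real" where
  "Phi0 x y = (if x \<in> \<Omega> \<and> y \<in> \<Omega> then \<Phi> x y else 0)"

definition test_fun :: "('a \<Rightarrow> real) \<Rightarrow> bool" where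
  "test_fun g \<longleftrightarrow> g \<in> borel_measurable lebesgue \<and> (\<exists>B. \<forall>x. \<bar>g x\<bar> \<le> B) \<and> (\<forall>x. x \<notin> \<Omega> \<longrightarrow> g x = 0)"

lemma sets_lebesgue_Omega: "\<Omega> \<in> sets lebesgue"
  using compact by (simp add: compact_imp_closed borel_closed sets_completionI_sets)

lemma emeasure_Omega_finite: "emeasure lebesgue \<Omega> < \<infinity>"
  using emeasure_compact_finite[OF compact] compact
  by (simp add: compact_imp_closed borel_closed)

lemma Phi0_bounded: "\<exists>M. \<forall>x y. \<bar>Phi0 x y\<bar> \<le> M"
proof -
  have "bounded ((\<lambda>(x, y). \<Phi> x y) ` (\<Omega> \<times> \<Omega>))"
    by (intro compact_imp_bounded compact_continuous_image continuous compact_Times compact)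
  then obtain M where M: "\<And>x y. x \<in> \<Omega> \<Longrightarrow> y \<in> \<Omega> \<Longrightarrow> \<bar>\<Phi> x y\<bar> \<le> M"
    unfolding bounded_iff by force
  then have "\<bar>Phi0 x y\<bar> \<le> max M 0" for x y
    unfolding Phi0_def by (simp add: le_max_iff_disj)
  then show ?thesis by blast
qed

lemma Phi0_measurable: "(\<lambda>(x, y). Phi0 x y) \<in> borel_measurable (lebesgue \<Otimes>\<^sub>M lebesgue)"
proof -
  have "(\<lambda>z. indicator (\<Omega> \<times> \<Omega>) z *\<^sub>R (\<lambda>(x, y). \<Phi> x y) z) \<in> borel_measurable borel"
    by (intro borel_measurable_continuous_on_indicator continuous)
      (simp add: borel_closed closed_Times compact_imp_closed compact)
  moreover have "(\<lambda>z. indicator (\<Omega> \<times> \<Omega>) z *\<^sub>R (\<lambda>(x, y). \<Phi> x y) z) = (\<lambda>(x, y). Phi0 x y)"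
    by (auto simp: Phi0_def indicator_def)
  ultimately show ?thesis using borel_measurable_lebesgue_pair by metis
qed

lemma Phi0_measurable_fst: "(\<lambda>x. Phi0 x y) \<in> borel_measurable lebesgue"
proof -
  have "(\<lambda>x. (x, y)) \<in> lebesgue \<rightarrow>\<^sub>M lebesgue \<Otimes>\<^sub>M lebesgue"
    by measurable
  from measurable_compose[OF this Phi0_measurable] show ?thesis by simp
qed

lemma test_fun_integrable: "test_fun g \<Longrightarrow> integrable lebesgue g"
  unfolding test_fun_def
  by (elim conjE exE, intro integrableI_bounded_set[where A=\<Omega>])
    (use sets_lebesgue_Omega emeasure_Omega_finite in auto)

lemma test_fun_mult:
  assumes "test_fun g" "h \<in> borel_measurable lebesgue" "\<And>x. \<bar>h x\<bar> \<le> M"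
  shows "test_fun (\<lambda>x. g x * h x)"
proof -
  obtain B where B: "\<And>x. \<bar>g x\<bar> \<le> B" using assms(1) unfolding test_fun_def by blast
  have "\<bar>g x * h x\<bar> \<le> B * M" for x
    unfolding abs_mult by (intro mult_mono B assms(3)) (use B[of x] in auto)
  then show ?thesis using assms unfolding test_fun_def by auto
qed

lemma test_fun_times:
  assumes "test_fun g" "test_fun h"
  shows "test_fun (\<lambda>x. g x * h x)"
proof -
  obtain C where "\<And>x. \<bar>h x\<bar> \<le> C" using assms(2) unfolding test_fun_def by blast
  with assms show ?thesis unfolding test_fun_def[of h] by (intro test_fun_mult) auto
qed

lemma test_fun_cmult: "test_fun g \<Longrightarrow> test_fun (\<lambda>x. a * g x)"
  using test_fun_mult[of g "\<lambda>_. a" "\<bar>a\<bar>"] by (simp add: mult.commute)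

lemma test_fun_add:
  assumes "test_fun g" "test_fun h"
  shows "test_fun (\<lambda>x. g x + h x)"
proof -
  obtain B C where B: "\<And>x. \<bar>g x\<bar> \<le> B" and C: "\<And>x. \<bar>h x\<bar> \<le> C"
    using assms unfolding test_fun_def by blast
  have "\<bar>g x + h x\<bar> \<le> B + C" for x
    using abs_triangle_ineq[of "g x" "h x"] B[of x] C[of x] by linarith
  then show ?thesis using assms unfolding test_fun_def by auto
qed

lemma test_fun_diff: "test_fun g \<Longrightarrow> test_fun h \<Longrightarrow> test_fun (\<lambda>x. g x - h x)"
  using test_fun_add[of g "\<lambda>x. - 1 * h x"] test_fun_cmult[of h "- 1"] by simp

lemma test_fun_sum:
  assumes "finite I" "\<And>i. i \<in> I \<Longrightarrow> test_fun (g i)"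
  shows "test_fun (\<lambda>x. \<Sum>i\<in>I. g i x)"
  using assms
proof (induction I rule: finite_induct)
  case empty
  then show ?case unfolding test_fun_def by auto
next
  case (insert i I)
  then show ?case by (simp add: test_fun_add)
qed

lemma test_fun_abs: "test_fun g \<Longrightarrow> test_fun (\<lambda>x. \<bar>g x\<bar>)"
  unfolding test_fun_def by (auto intro: borel_measurable_abs)

lemma test_fun_indicator:
  "A \<in> sets lebesgue \<Longrightarrow> A \<subseteq> \<Omega> \<Longrightarrow> test_fun (indicator A)"
  unfolding test_fun_def by (auto simp: indicator_def intro!: exI[of _ 1])

lemma integrable_test_fun_tensor:
  assumes g: "test_fun g" and h: "test_fun h"
    and F: "(\<lambda>(x, y). F x y) \<in> borel_measurable (lebesgue \<Otimes>\<^sub>M lebesgue)" and bound: "\<And>x y. \<bar>F x y\<bar> \<le> M"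
  shows "integrable (lebesgue \<Otimes>\<^sub>M lebesgue) (\<lambda>(x, y). g x * h y * F x y)"
proof -
  obtain A B where A: "\<And>x. \<bar>g x\<bar> \<le> A" and B: "\<And>x. \<bar>h x\<bar> \<le> B"
    using g h unfolding test_fun_def by blast
  have "\<bar>g x * h y * F x y\<bar> \<le> A * B * M" for x y
    unfolding abs_mult using A[of x] B[of y]
    by (intro mult_mono A B bound) (auto intro: order_trans[OF abs_ge_zero])
  moreover have "(\<lambda>(x, y). g x * h y * F x y) \<in> borel_measurable (lebesgue \<Otimes>\<^sub>M lebesgue)"
  proof -
    have [measurable]: "g \<in> borel_measurable lebesgue" "h \<in> borel_measurable lebesgue"
      using g h unfolding test_fun_def by auto
    show ?thesis using F by measurable
  qed
  moreover have "emeasure (lebesgue \<Otimes>\<^sub>M lebesgue) (\<Omega> \<times> \<Omega>) < \<infinity>"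
    using emeasure_Omega_finite sets_lebesgue_Omega
    by (simp add: lebesgue.emeasure_pair_measure_Times ennreal_mult_less_top)
  ultimately show ?thesis
    using g h sets_lebesgue_Omega unfolding test_fun_def
    by (intro integrableI_bounded_set[where A="\<Omega> \<times> \<Omega>" and B="A * B * M"] AE_I2)
      (auto simp: mem_Times_iff)
qed

lemma integrable_tensor:
  assumes "test_fun g" "test_fun h"
  shows "integrable (lebesgue \<Otimes>\<^sub>M lebesgue) (\<lambda>(x, y). g x * h y)"
proof -
  have "integrable (lebesgue \<Otimes>\<^sub>M lebesgue) (\<lambda>(x, y). g x * h y * 1)"
    by (rule integrable_test_fun_tensor[OF assms, where M=1]) auto
  then show ?thesis by simp
qed

lemma integral_tensor:
  assumes "test_fun g" "test_fun h"
  shows "(\<integral>(x, y). g x * h y \<partial>(lebesgue \<Otimes>\<^sub>M lebesgue)) = integral\<^sup>L lebesgue g * integral\<^sup>L lebesgue h"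
proof -
  have "(\<integral>x. (\<integral>y. g x * h y \<partial>lebesgue) \<partial>lebesgue) = (\<integral>(x, y). g x * h y \<partial>(lebesgue \<Otimes>\<^sub>M lebesgue))"
    by (rule lebesgue_pair.integral_fst[OF integrable_tensor[OF assms]])
  then show ?thesis by simp
qed

definition kernel_form :: "('a \<Rightarrow> real) \<Rightarrow> ('a \<Rightarrow> real) \<Rightarrow> real" where
  "kernel_form g h = (\<integral>(x, y). g x * h y * Phi0 x y \<partial>(lebesgue \<Otimes>\<^sub>M lebesgue))"

definition potential :: "('a \<Rightarrow> real) \<Rightarrow> 'a \<Rightarrow> real" where
  "potential g y = (\<integral>x. g x * Phi0 x y \<partial>lebesgue)"

lemma integrable_kernel_form:
  assumes "test_fun g" "test_fun h"
  shows "integrable (lebesgue \<Otimes>\<^sub>M lebesgue) (\<lambda>(x, y). g x * h y * Phi0 x y)"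
proof -
  obtain M where "\<And>x y. \<bar>Phi0 x y\<bar> \<le> M" using Phi0_bounded by blast
  then show ?thesis by (intro integrable_test_fun_tensor[OF assms Phi0_measurable])
qed

lemma integrable_potential:
  assumes "test_fun g"
  shows "integrable lebesgue (\<lambda>x. g x * Phi0 x y)"
proof -
  obtain M where "\<And>x y. \<bar>Phi0 x y\<bar> \<le> M" using Phi0_bounded by blast
  then show ?thesis
    by (intro test_fun_integrable test_fun_mult[OF assms Phi0_measurable_fst])
qed

lemma kernel_form_sum:
  assumes I: "finite I" "\<And>i. i \<in> I \<Longrightarrow> test_fun (g i)"
    and J: "finite J" "\<And>j. j \<in> J \<Longrightarrow> test_fun (h j)"
  shows "kernel_form (\<lambda>x. \<Sum>i\<in>I. a i * g i x) (\<lambda>y. \<Sum>j\<in>J. b j * h j y)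
    = (\<Sum>i\<in>I. \<Sum>j\<in>J. a i * b j * kernel_form (g i) (h j))"
proof -
  have "(\<Sum>i\<in>I. a i * g i x) * (\<Sum>j\<in>J. b j * h j y) * Phi0 x y
      = (\<Sum>i\<in>I. \<Sum>j\<in>J. a i * b j * (g i x * h j y * Phi0 x y))" for x y
    by (simp add: sum_distrib_left sum_distrib_right ac_simps) (rule sum.swap)
  then have "kernel_form (\<lambda>x. \<Sum>i\<in>I. a i * g i x) (\<lambda>y. \<Sum>j\<in>J. b j * h j y)
      = (\<integral>z. (\<Sum>i\<in>I. \<Sum>j\<in>J. a i * b j * (\<lambda>(x, y). g i x * h j y * Phi0 x y) z) \<partial>(lebesgue \<Otimes>\<^sub>M lebesgue))"
    unfolding kernel_form_def by (simp add: case_prod_beta')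
  also have "\<dots> = (\<Sum>i\<in>I. \<Sum>j\<in>J. a i * b j * kernel_form (g i) (h j))"
    using integrable_kernel_form I J unfolding kernel_form_def
    by (simp add: Bochner_Integration.integral_sum Bochner_Integration.integrable_sum)
  finally show ?thesis .
qed

lemma kernel_form_indicator:
  assumes A: "A \<in> sets lebesgue" "A \<subseteq> \<Omega>" and B: "B \<in> sets lebesgue" "B \<subseteq> \<Omega>"
  shows "kernel_form (indicator A) (indicator B) = (LINT x:A|lebesgue. (LINT y:B|lebesgue. \<Phi> x y))"
proof -
  have int: "integrable (lebesgue \<Otimes>\<^sub>M lebesgue) (\<lambda>(x, y). indicator A x * indicator B y * Phi0 x y)"
    by (intro integrable_kernel_form test_fun_indicator A B)
  have "(\<integral>y. indicator A x * indicator B y * Phi0 x y \<partial>lebesgue) = indicator A x * (LINT y:B|lebesgue. \<Phi> x y)" for x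
  proof (cases "x \<in> A")
    case True
    have "(\<lambda>y. indicator A x * indicator B y * Phi0 x y) = (\<lambda>y. indicator B y *\<^sub>R \<Phi> x y)"
      using A B True by (auto simp: indicator_def Phi0_def fun_eq_iff)
    then show ?thesis using True by (simp add: set_lebesgue_integral_def)
  qed simp
  then show ?thesis
    unfolding kernel_form_def lebesgue_pair.integral_fst[OF int, symmetric]
    by (simp add: set_lebesgue_integral_def)
qed

lemma kernel_fun_eq_sum_Phi0:
  assumes "fin_coeff \<Omega> c" "x \<in> \<Omega>"
  shows "kernel_fun \<Phi> c x = (\<Sum>y\<in>{y. c y \<noteq> 0}. c y * Phi0 x y)"
  using assms unfolding kernel_fun_def fin_coeff_def Phi0_def by (intro sum.cong) auto

lemma integral_kernel_fun:
  assumes g: "test_fun g" and c: "fin_coeff \<Omega> c"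
  shows "integrable lebesgue (\<lambda>x. g x * kernel_fun \<Phi> c x)"
    and "(\<integral>x. g x * kernel_fun \<Phi> c x \<partial>lebesgue) = (\<Sum>y\<in>{y. c y \<noteq> 0}. c y * potential g y)"
proof -
  have "g x * kernel_fun \<Phi> c x = (\<Sum>y\<in>{y. c y \<noteq> 0}. c y * (g x * Phi0 x y))" for x
  proof (cases "x \<in> \<Omega>")
    case True
    then show ?thesis by (simp add: kernel_fun_eq_sum_Phi0[OF c] sum_distrib_left ac_simps)
  qed (use g in \<open>simp add: test_fun_def\<close>)
  then show "integrable lebesgue (\<lambda>x. g x * kernel_fun \<Phi> c x)"
    and "(\<integral>x. g x * kernel_fun \<Phi> c x \<partial>lebesgue) = (\<Sum>y\<in>{y. c y \<noteq> 0}. c y * potential g y)"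
    using integrable_potential[OF g] by (simp_all add: potential_def)
qed

lemma set_nn_integral_square_test_fun:
  assumes "test_fun h"
  shows "(\<integral>\<^sup>+x\<in>\<Omega>. ennreal ((h x)\<^sup>2) \<partial>lebesgue) = ennreal (\<integral>x. (h x)\<^sup>2 \<partial>lebesgue)"
proof -
  have "h x = 0" if "x \<notin> \<Omega>" for x using assms that unfolding test_fun_def by blast
  then have "(\<integral>\<^sup>+x\<in>\<Omega>. ennreal ((h x)\<^sup>2) \<partial>lebesgue) = (\<integral>\<^sup>+x. ennreal ((h x)\<^sup>2) \<partial>lebesgue)"
    by (intro nn_integral_cong) (simp add: indicator_def)
  also have "\<dots> = ennreal (\<integral>x. (h x)\<^sup>2 \<partial>lebesgue)"
    using test_fun_integrable[OF test_fun_times[OF assms assms]]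
    by (intro nn_integral_eq_integral) (simp_all add: power2_eq_square)
  finally show ?thesis .
qed

lemma integral_square_le_if_orthogonal:
  assumes g: "test_fun g" and u: "test_fun u" and "(\<integral>x. g x * u x \<partial>lebesgue) = 0"
  shows "(\<integral>x. (g x)\<^sup>2 \<partial>lebesgue) \<le> (\<integral>x. (g x - u x)\<^sup>2 \<partial>lebesgue)"
proof -
  have d: "test_fun (\<lambda>x. g x - u x)" by (rule test_fun_diff[OF g u])
  have int_g: "integrable lebesgue (\<lambda>x. (g x)\<^sup>2)"
    using test_fun_integrable[OF test_fun_times[OF g g]] by (simp add: power2_eq_square)
  have int_d: "integrable lebesgue (\<lambda>x. (g x - u x)\<^sup>2)"
    using test_fun_integrable[OF test_fun_times[OF d d]] by (simp add: power2_eq_square)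
  have int_gu: "integrable lebesgue (\<lambda>x. g x * u x)"
    by (rule test_fun_integrable[OF test_fun_times[OF g u]])
  have "(\<integral>x. (g x)\<^sup>2 \<partial>lebesgue) \<le> (\<integral>x. (g x - u x)\<^sup>2 + 2 * (g x * u x) \<partial>lebesgue)"
  proof (rule integral_mono[OF int_g])
    show "integrable lebesgue (\<lambda>x. (g x - u x)\<^sup>2 + 2 * (g x * u x))"
      using int_d int_gu by simp
    fix x
    have "(g x - u x)\<^sup>2 + 2 * (g x * u x) = (g x)\<^sup>2 + (u x)\<^sup>2"
      by (simp add: power2_diff)
    then show "(g x)\<^sup>2 \<le> (g x - u x)\<^sup>2 + 2 * (g x * u x)" by simp
  qed
  also have "\<dots> = (\<integral>x. (g x - u x)\<^sup>2 \<partial>lebesgue)"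
    using int_d int_gu assms(3) by simp
  finally show ?thesis .
qed

section \<open>Discretisation by a finite net\<close>

lemma Phi_uniformly_close:
  assumes "\<epsilon> > 0"
  obtains \<delta> where "\<delta> > 0"
    "\<And>x x' y y'. \<lbrakk>x \<in> \<Omega>; x' \<in> \<Omega>; y \<in> \<Omega>; y' \<in> \<Omega>; dist x' x < \<delta>; dist y' y < \<delta>\<rbrakk>
      \<Longrightarrow> \<bar>\<Phi> x' y' - \<Phi> x y\<bar> \<le> \<epsilon>"
proof -
  have "uniformly_continuous_on (\<Omega> \<times> \<Omega>) (\<lambda>(x, y). \<Phi> x y)"
    by (rule compact_uniformly_continuous[OF continuous compact_Times[OF compact compact]])
  then obtain \<delta> where "\<delta> > 0" and \<delta>: "\<forall>p\<in>\<Omega> \<times> \<Omega>. \<forall>p'\<in>\<Omega> \<times> \<Omega>. dist p' p < \<delta> \<longrightarrow>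
      dist ((\<lambda>(x, y). \<Phi> x y) p') ((\<lambda>(x, y). \<Phi> x y) p) < \<epsilon>"
    unfolding uniformly_continuous_on_def using assms by blast
  show ?thesis
  proof (rule that[of "\<delta> / 2"])
    fix x x' y y' assume xy: "x \<in> \<Omega>" "x' \<in> \<Omega>" "y \<in> \<Omega>" "y' \<in> \<Omega>"
      and close: "dist x' x < \<delta> / 2" "dist y' y < \<delta> / 2"
    have "dist (x', y') (x, y) \<le> dist x' x + dist y' y"
      unfolding dist_Pair_Pair by (rule sqrt_sum_squares_le_sum) auto
    also have "\<dots> < \<delta>" using close by simp
    finally have "dist (\<Phi> x' y') (\<Phi> x y) < \<epsilon>"
      using \<delta> xy by fastforce
    then show "\<bar>\<Phi> x' y' - \<Phi> x y\<bar> \<le> \<epsilon>"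
      by (simp add: dist_real_def)
  qed (use \<open>\<delta> > 0\<close> in simp)
qed

lemma finite_measurable_net:
  assumes "\<delta> > 0"
  obtains n :: nat and ps :: "nat \<Rightarrow> 'a" and idx :: "'a \<Rightarrow> nat" where
    "\<And>k. k < n \<Longrightarrow> ps k \<in> \<Omega>"
    "\<And>x. x \<in> \<Omega> \<Longrightarrow> idx x < n \<and> dist (ps (idx x)) x < \<delta>"
    "idx \<in> lebesgue \<rightarrow>\<^sub>M count_space UNIV"
proof -
  obtain T where T: "T \<subseteq> \<Omega>" "finite T" "\<Omega> \<subseteq> (\<Union>c\<in>T. ball c \<delta>)"
    by (rule compactE_image[OF compact, of \<Omega> "\<lambda>c. ball c \<delta>"]) (use assms in auto)
  obtain xs where xs: "set xs = T" using finite_list[OF T(2)] by blast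
  define idx where "idx x = (LEAST i. i < length xs \<and> dist (xs ! i) x < \<delta>)" for x
  show ?thesis
  proof (rule that[of "length xs" "\<lambda>k. xs ! k" idx])
    show "xs ! k \<in> \<Omega>" if "k < length xs" for k using that T xs by auto
  next
    fix x assume "x \<in> \<Omega>"
    then obtain c where "c \<in> T" "dist c x < \<delta>" using T by auto
    then obtain i where "i < length xs" "dist (xs ! i) x < \<delta>"
      using xs by (metis in_set_conv_nth)
    then show "idx x < length xs \<and> dist (xs ! (idx x)) x < \<delta>"
      unfolding idx_def by (metis (mono_tags, lifting) LeastI)
  next
    have "{x. i < length xs \<and> dist (xs ! i) x < \<delta>} = (if i < length xs then ball (xs ! i) \<delta> else {})" for i
      by (auto simp: ball_def)
    then have "{x. i < length xs \<and> dist (xs ! i) x < \<delta>} \<in> sets lebesgue" for i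
      by (simp add: sets_completionI_sets)
    then show "idx \<in> lebesgue \<rightarrow>\<^sub>M count_space UNIV"
      unfolding idx_def by (intro measurable_Least) (simp add: pred_def)
  qed
qed

definition cell_integral :: "('a \<Rightarrow> real) \<Rightarrow> ('a \<Rightarrow> nat) \<Rightarrow> nat \<Rightarrow> real" where
  "cell_integral g idx k = (\<integral>x. g x * of_bool (idx x = k) \<partial>lebesgue)"

lemma test_fun_cell:
  assumes "test_fun g" "idx \<in> lebesgue \<rightarrow>\<^sub>M count_space UNIV"
  shows "test_fun (\<lambda>x. g x * of_bool (idx x = k))"
proof (rule test_fun_mult[OF assms(1), where M=1])
  show "(\<lambda>x. of_bool (idx x = k)) \<in> borel_measurable lebesgue"
    using measurable_compose[OF assms(2), of "\<lambda>i. of_bool (i = k)" borel] by simp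
qed simp

lemma integral_step_kernel:
  assumes g: "test_fun g" and idx: "idx \<in> lebesgue \<rightarrow>\<^sub>M count_space UNIV"
    and n: "\<And>x. x \<in> \<Omega> \<Longrightarrow> idx x < n"
  shows "integrable lebesgue (\<lambda>x. g x * H (idx x))"
    and "(\<integral>x. g x * H (idx x) \<partial>lebesgue) = (\<Sum>k<n. cell_integral g idx k * H k)"
proof -
  have "g x * H (idx x) = (\<Sum>k<n. g x * of_bool (idx x = k) * H k)" for x
  proof (cases "x \<in> \<Omega>")
    case True
    then show ?thesis using sum_of_bool_delta[OF n[OF True], of "\<lambda>k. g x * H k"]
      by (simp add: ac_simps)
  qed (use g in \<open>simp add: test_fun_def\<close>)
  moreover have "integrable lebesgue (\<lambda>x. g x * of_bool (idx x = k) * H k)" for k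
    using test_fun_integrable[OF test_fun_cell[OF g idx]] by simp
  ultimately show "integrable lebesgue (\<lambda>x. g x * H (idx x))"
    and "(\<integral>x. g x * H (idx x) \<partial>lebesgue) = (\<Sum>k<n. cell_integral g idx k * H k)"
    by (simp_all add: cell_integral_def)
qed

lemma integral_step_kernel2:
  assumes g: "test_fun g" and idx: "idx \<in> lebesgue \<rightarrow>\<^sub>M count_space UNIV"
    and n: "\<And>x. x \<in> \<Omega> \<Longrightarrow> idx x < n"
  shows "integrable (lebesgue \<Otimes>\<^sub>M lebesgue) (\<lambda>(x, y). g x * g y * H (idx x) (idx y))"
    and "(\<integral>(x, y). g x * g y * H (idx x) (idx y) \<partial>(lebesgue \<Otimes>\<^sub>M lebesgue))
      = (\<Sum>k<n. \<Sum>l<n. cell_integral g idx k * cell_integral g idx l * H k l)"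
proof -
  let ?g = "\<lambda>k x. g x * of_bool (idx x = k)"
  have "g x * g y * H (idx x) (idx y) = (\<Sum>k<n. \<Sum>l<n. ?g k x * ?g l y * H k l)" for x y
  proof (cases "x \<in> \<Omega> \<and> y \<in> \<Omega>")
    case True
    have "(\<Sum>k<n. \<Sum>l<n. ?g k x * ?g l y * H k l)
        = (\<Sum>k<n. of_bool (idx x = k) * (\<Sum>l<n. of_bool (idx y = l) * (g x * g y * H k l)))"
      by (simp add: sum_distrib_left ac_simps)
    also have "\<dots> = g x * g y * H (idx x) (idx y)"
      using True n by (simp add: sum_of_bool_delta)
    finally show ?thesis by simp
  qed (use g in \<open>auto simp: test_fun_def\<close>)
  then have eq: "(\<lambda>(x, y). g x * g y * H (idx x) (idx y)) = (\<lambda>z. \<Sum>k<n. \<Sum>l<n. (\<lambda>(x, y). ?g k x * ?g l y) z * H k l)"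
    by auto
  have int: "integrable (lebesgue \<Otimes>\<^sub>M lebesgue) (\<lambda>(x, y). ?g k x * ?g l y)" for k l
    by (rule integrable_tensor[OF test_fun_cell[OF g idx] test_fun_cell[OF g idx]])
  show "integrable (lebesgue \<Otimes>\<^sub>M lebesgue) (\<lambda>(x, y). g x * g y * H (idx x) (idx y))"
    unfolding eq using int by auto
  show "(\<integral>(x, y). g x * g y * H (idx x) (idx y) \<partial>(lebesgue \<Otimes>\<^sub>M lebesgue))
      = (\<Sum>k<n. \<Sum>l<n. cell_integral g idx k * cell_integral g idx l * H k l)"
    unfolding eq using int
    by (simp add: Bochner_Integration.integral_sum Bochner_Integration.integrable_sum
        integral_tensor[OF test_fun_cell[OF g idx] test_fun_cell[OF g idx]] cell_integral_def)
qed

lemma kernel_form_step_error: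
  assumes g: "test_fun g" and idx: "idx \<in> lebesgue \<rightarrow>\<^sub>M count_space UNIV"
    and n: "\<And>x. x \<in> \<Omega> \<Longrightarrow> idx x < n"
    and close: "\<And>x y. x \<in> \<Omega> \<Longrightarrow> y \<in> \<Omega> \<Longrightarrow> \<bar>\<Phi> (ps (idx x)) (ps (idx y)) - \<Phi> x y\<bar> \<le> \<epsilon>"
  shows "(\<Sum>k<n. \<Sum>l<n. cell_integral g idx k * cell_integral g idx l * \<Phi> (ps k) (ps l))
    \<le> kernel_form g g + \<epsilon> * (\<integral>x. \<bar>g x\<bar> \<partial>lebesgue)\<^sup>2"
proof -
  note step = integral_step_kernel2[OF g idx n, of "\<lambda>k l. \<Phi> (ps k) (ps l)"]
  have gabs: "test_fun (\<lambda>x. \<bar>g x\<bar>)" by (rule test_fun_abs[OF g])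
  have g0: "g x = 0" if "x \<notin> \<Omega>" for x using g that unfolding test_fun_def by blast
  have int: "integrable (lebesgue \<Otimes>\<^sub>M lebesgue)
      (\<lambda>(x, y). g x * g y * \<Phi> (ps (idx x)) (ps (idx y)) - g x * g y * Phi0 x y)"
    using step(1) integrable_kernel_form[OF g g] by (simp add: case_prod_beta')
  have "(\<Sum>k<n. \<Sum>l<n. cell_integral g idx k * cell_integral g idx l * \<Phi> (ps k) (ps l)) - kernel_form g g
      = (\<integral>(x, y). g x * g y * \<Phi> (ps (idx x)) (ps (idx y)) - g x * g y * Phi0 x y \<partial>(lebesgue \<Otimes>\<^sub>M lebesgue))"
    using step integrable_kernel_form[OF g g] unfolding kernel_form_def by (simp add: case_prod_beta')
  also have "\<dots> \<le> (\<integral>z. \<epsilon> * (\<lambda>(x, y). \<bar>g x\<bar> * \<bar>g y\<bar>) z \<partial>(lebesgue \<Otimes>\<^sub>M lebesgue))"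
  proof (rule order_trans[OF abs_ge_self integral_abs_bound_integral[OF int]])
    show "integrable (lebesgue \<Otimes>\<^sub>M lebesgue) (\<lambda>z. \<epsilon> * (\<lambda>(x, y). \<bar>g x\<bar> * \<bar>g y\<bar>) z)"
      using integrable_tensor[OF gabs gabs] by (rule integrable_mult_right)
  next
    fix z :: "'a \<times> 'a"
    obtain x y where z: "z = (x, y)" by (cases z)
    show "\<bar>(\<lambda>(x, y). g x * g y * \<Phi> (ps (idx x)) (ps (idx y)) - g x * g y * Phi0 x y) z\<bar>
        \<le> \<epsilon> * (\<lambda>(x, y). \<bar>g x\<bar> * \<bar>g y\<bar>) z"
    proof (cases "x \<in> \<Omega> \<and> y \<in> \<Omega>")
      case True
      then have "\<bar>\<Phi> (ps (idx x)) (ps (idx y)) - Phi0 x y\<bar> \<le> \<epsilon>"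
        using close by (simp add: Phi0_def)
      then show ?thesis unfolding z
        by (simp add: abs_mult right_diff_distrib[symmetric] mult.commute[of \<epsilon>] mult_left_mono)
    qed (use g0 z in auto)
  qed
  also have "\<dots> = \<epsilon> * (\<integral>x. \<bar>g x\<bar> \<partial>lebesgue)\<^sup>2"
    using integral_tensor[OF gabs gabs] by (simp add: power2_eq_square)
  finally show ?thesis by simp
qed

lemma potential_step_error:
  assumes g: "test_fun g" and idx: "idx \<in> lebesgue \<rightarrow>\<^sub>M count_space UNIV"
    and n: "\<And>x. x \<in> \<Omega> \<Longrightarrow> idx x < n" and y: "y \<in> \<Omega>"
    and close: "\<And>x. x \<in> \<Omega> \<Longrightarrow> \<bar>\<Phi> (ps (idx x)) y - \<Phi> x y\<bar> \<le> \<epsilon>"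
  shows "\<bar>(\<Sum>k<n. cell_integral g idx k * \<Phi> (ps k) y) - potential g y\<bar> \<le> \<epsilon> * (\<integral>x. \<bar>g x\<bar> \<partial>lebesgue)"
proof -
  note step = integral_step_kernel[OF g idx n, of "\<lambda>k. \<Phi> (ps k) y"]
  have g0: "g x = 0" if "x \<notin> \<Omega>" for x using g that unfolding test_fun_def by blast
  have int: "integrable lebesgue (\<lambda>x. g x * \<Phi> (ps (idx x)) y - g x * Phi0 x y)"
    using step(1) integrable_potential[OF g] by simp
  have "(\<Sum>k<n. cell_integral g idx k * \<Phi> (ps k) y) - potential g y
      = (\<integral>x. g x * \<Phi> (ps (idx x)) y - g x * Phi0 x y \<partial>lebesgue)"
    using step integrable_potential[OF g] unfolding potential_def by simp
  also have "\<bar>\<dots>\<bar> \<le> (\<integral>x. \<bar>g x\<bar> * \<epsilon> \<partial>lebesgue)"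
  proof (rule integral_abs_bound_integral[OF int])
    show "integrable lebesgue (\<lambda>x. \<bar>g x\<bar> * \<epsilon>)"
      using test_fun_integrable[OF test_fun_abs[OF g]] by simp
  next
    fix x
    show "\<bar>g x * \<Phi> (ps (idx x)) y - g x * Phi0 x y\<bar> \<le> \<bar>g x\<bar> * \<epsilon>"
    proof (cases "x \<in> \<Omega>")
      case True
      then have "\<bar>\<Phi> (ps (idx x)) y - Phi0 x y\<bar> \<le> \<epsilon>"
        using close y by (simp add: Phi0_def)
      then show ?thesis
        by (simp add: abs_mult right_diff_distrib[symmetric] mult_left_mono)
    qed (use g0 in auto)
  qed
  also have "\<dots> = \<epsilon> * (\<integral>x. \<bar>g x\<bar> \<partial>lebesgue)" by (simp add: mult.commute)
  finally show ?thesis .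
qed

end

section \<open>Positivity of the kernel form\<close>

locale continuous_pd_kernel = continuous_kernel +
  assumes symmetric: "\<forall>x\<in>\<Omega>. \<forall>y\<in>\<Omega>. \<Phi> x y = \<Phi> y x"
    and pd: "pd_kernel \<Omega> \<Phi>"
begin

text \<open>Replace \<open>\<Phi> x y\<close> by the step kernel \<open>\<Phi> (ps (idx x)) (ps (idx y))\<close>, which rounds
  both arguments to a fine finite net of \<open>\<Omega>\<close>: for the step kernel both integrals become
  finite sums to which positive definiteness applies, and uniform continuity bounds the error.\<close>
lemma kernel_form_potential_ineq_approx:
  assumes g: "test_fun g" and c: "fin_coeff \<Omega> c" and "\<epsilon> > 0"
  defines "L \<equiv> \<integral>x. \<bar>g x\<bar> \<partial>lebesgue"
  shows "0 \<le> kernel_form g g + 2 * (\<Sum>y\<in>{y. c y \<noteq> 0}. c y * potential g y) + kernel_norm2 \<Phi> c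
    + \<epsilon> * (L\<^sup>2 + 2 * (\<Sum>y\<in>{y. c y \<noteq> 0}. \<bar>c y\<bar>) * L)"
proof -
  define Y where "Y = {y. c y \<noteq> 0}"
  have Y: "finite Y" "Y \<subseteq> \<Omega>" using c unfolding Y_def fin_coeff_def by auto
  obtain \<delta> where "\<delta> > 0" and close: "\<And>x x' y y'. \<lbrakk>x \<in> \<Omega>; x' \<in> \<Omega>; y \<in> \<Omega>; y' \<in> \<Omega>;
      dist x' x < \<delta>; dist y' y < \<delta>\<rbrakk> \<Longrightarrow> \<bar>\<Phi> x' y' - \<Phi> x y\<bar> \<le> \<epsilon>"
    using Phi_uniformly_close[OF \<open>\<epsilon> > 0\<close>] by blast
  obtain n :: nat and ps :: "nat \<Rightarrow> 'a" and idx :: "'a \<Rightarrow> nat" where ps: "\<And>k. k < n \<Longrightarrow> ps k \<in> \<Omega>"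
    and idx: "\<And>x. x \<in> \<Omega> \<Longrightarrow> idx x < n \<and> dist (ps (idx x)) x < \<delta>"
    and idx_meas: "idx \<in> lebesgue \<rightarrow>\<^sub>M count_space UNIV"
    using finite_measurable_net[OF \<open>\<delta> > 0\<close>] by blast
  have n: "\<And>x. x \<in> \<Omega> \<Longrightarrow> idx x < n" using idx by blast
  define G where "G = cell_integral g idx"
  have energy: "(\<Sum>k<n. \<Sum>l<n. G k * G l * \<Phi> (ps k) (ps l)) \<le> kernel_form g g + \<epsilon> * L\<^sup>2"
    unfolding G_def L_def using close idx ps
    by (intro kernel_form_step_error[OF g idx_meas n]) auto
  have "(\<Sum>y\<in>Y. c y * (\<Sum>k<n. G k * \<Phi> (ps k) y)) \<le> (\<Sum>y\<in>Y. c y * potential g y + \<bar>c y\<bar> * (\<epsilon> * L))"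
  proof (rule sum_mono)
    fix y assume "y \<in> Y"
    then have err: "\<bar>(\<Sum>k<n. G k * \<Phi> (ps k) y) - potential g y\<bar> \<le> \<epsilon> * L"
      unfolding G_def L_def using Y close idx ps \<open>\<delta> > 0\<close>
      by (intro potential_step_error[OF g idx_meas n]) auto
    have "c y * ((\<Sum>k<n. G k * \<Phi> (ps k) y) - potential g y)
        \<le> \<bar>c y\<bar> * \<bar>(\<Sum>k<n. G k * \<Phi> (ps k) y) - potential g y\<bar>"
      by (metis abs_ge_self abs_mult)
    also have "\<dots> \<le> \<bar>c y\<bar> * (\<epsilon> * L)" using err by (rule mult_left_mono) simp
    finally show "c y * (\<Sum>k<n. G k * \<Phi> (ps k) y) \<le> c y * potential g y + \<bar>c y\<bar> * (\<epsilon> * L)"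
      by (simp add: algebra_simps)
  qed
  moreover have "(\<Sum>y\<in>Y. c y * potential g y + \<bar>c y\<bar> * (\<epsilon> * L))
      = (\<Sum>y\<in>Y. c y * potential g y) + \<epsilon> * (\<Sum>y\<in>Y. \<bar>c y\<bar>) * L"
    by (simp add: sum.distrib sum_distrib_left sum_distrib_right ac_simps)
  moreover have "0 \<le> (\<Sum>k<n. \<Sum>l<n. G k * G l * \<Phi> (ps k) (ps l))
      + 2 * (\<Sum>y\<in>Y. c y * (\<Sum>k<n. G k * \<Phi> (ps k) y)) + kernel_norm2 \<Phi> c"
    unfolding Y_def by (rule pd_kernel_mixed_sum_nonneg[OF pd symmetric _ _ c]) (use ps in auto)
  ultimately show ?thesis
    using energy unfolding Y_def[symmetric] by (simp add: distrib_left)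
qed

lemma kernel_form_potential_ineq:
  assumes g: "test_fun g" and c: "fin_coeff \<Omega> c"
  shows "0 \<le> kernel_form g g + 2 * (\<Sum>y\<in>{y. c y \<noteq> 0}. c y * potential g y) + kernel_norm2 \<Phi> c"
    (is "0 \<le> ?Q")
proof -
  define L where "L = (\<integral>x. \<bar>g x\<bar> \<partial>lebesgue)"
  define K where "K = L\<^sup>2 + 2 * (\<Sum>y\<in>{y. c y \<noteq> 0}. \<bar>c y\<bar>) * L"
  have "K \<ge> 0" unfolding K_def L_def by (simp add: sum_nonneg)
  have "- ?Q \<le> 0 + e" if "e > 0" for e
  proof -
    have "e / (K + 1) > 0" using \<open>K \<ge> 0\<close> that by simp
    from kernel_form_potential_ineq_approx[OF g c this]
    have "- ?Q \<le> e / (K + 1) * K" unfolding K_def L_def by simp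
    also have "\<dots> \<le> e" using \<open>K \<ge> 0\<close> that by (simp add: field_simps)
    finally show ?thesis by simp
  qed
  then have "- ?Q \<le> 0" by (rule field_le_epsilon)
  then show ?thesis by simp
qed

lemma kernel_form_nonneg: "test_fun g \<Longrightarrow> 0 \<le> kernel_form g g"
  using kernel_form_potential_ineq[of g "\<lambda>_. 0"] by (simp add: fin_coeff_def kernel_norm2_def)

lemma potential_eq_0_if_kernel_form_eq_0:
  assumes g: "test_fun g" and "kernel_form g g = 0" and y: "y \<in> \<Omega>"
  shows "potential g y = 0"
proof (rule linear_term_zero_if_quadratic_nonneg)
  fix t :: real
  show "0 \<le> 2 * t * potential g y + t * t * \<Phi> y y"
  proof (cases "t = 0")
    case False
    define c where "c z = (if z = y then t else 0)" for z
    have supp: "{z. c z \<noteq> 0} = {y}" using False unfolding c_def by auto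
    have "fin_coeff \<Omega> c" unfolding fin_coeff_def supp using y by simp
    from kernel_form_potential_ineq[OF g this] show ?thesis
      using \<open>kernel_form g g = 0\<close> by (simp add: supp kernel_norm2_def c_def[of y] algebra_simps)
  qed simp
qed

lemma native_space_approx:
  assumes "f \<in> native_space \<Omega> \<Phi>"
  obtains s C where "\<And>m. fin_coeff \<Omega> (s m)"
    "\<And>x. x \<in> \<Omega> \<Longrightarrow> (\<lambda>m. kernel_fun \<Phi> (s m) x) \<longlonglongrightarrow> f x"
    "\<And>m x. x \<in> \<Omega> \<Longrightarrow> \<bar>kernel_fun \<Phi> (s m) x\<bar> \<le> C"
proof -
  obtain s where s: "\<forall>m. fin_coeff \<Omega> (s m)"
    and Cauchy: "\<forall>\<epsilon>>0. \<exists>N. \<forall>m\<ge>N. \<forall>k\<ge>N. kernel_norm2 \<Phi> (\<lambda>x. s m x - s k x) < \<epsilon>"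
    and lim: "\<forall>x\<in>\<Omega>. (\<lambda>m. kernel_fun \<Phi> (s m) x) \<longlonglongrightarrow> f x"
    using assms unfolding native_space_def by blast
  obtain R where R: "\<And>m. kernel_norm2 \<Phi> (s m) \<le> R"
    using kernel_norm2_Cauchy_bounded[OF pd s Cauchy] by blast
  obtain M where M: "\<And>x y. \<bar>Phi0 x y\<bar> \<le> M" using Phi0_bounded by blast
  have "\<bar>kernel_fun \<Phi> (s m) x\<bar> \<le> (R + M) / 2" if "x \<in> \<Omega>" for m x
    using kernel_fun_abs_le[OF pd symmetric s[rule_format] that, of m] R[of m] M[of x x] that
    by (simp add: Phi0_def)
  with that s lim show ?thesis by blast
qed

lemma test_fun_native_space:
  assumes "f \<in> native_space \<Omega> \<Phi>"
  shows "test_fun (\<lambda>x. indicator \<Omega> x * f x)"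
proof -
  obtain s C where s: "\<And>m. fin_coeff \<Omega> (s m)"
    and lim: "\<And>x. x \<in> \<Omega> \<Longrightarrow> (\<lambda>m. kernel_fun \<Phi> (s m) x) \<longlonglongrightarrow> f x"
    and C: "\<And>m x. x \<in> \<Omega> \<Longrightarrow> \<bar>kernel_fun \<Phi> (s m) x\<bar> \<le> C"
    using native_space_approx[OF assms] by blast
  have "(\<lambda>m. \<Sum>y\<in>{y. s m y \<noteq> 0}. s m y * Phi0 x y) \<longlonglongrightarrow> indicator \<Omega> x * f x" for x
    using lim[of x] by (cases "x \<in> \<Omega>") (auto simp: kernel_fun_eq_sum_Phi0[OF s] Phi0_def)
  then have "(\<lambda>x. indicator \<Omega> x * f x) \<in> borel_measurable lebesgue"
    by (rule borel_measurable_LIMSEQ_real) (intro borel_measurable_sum borel_measurable_times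
        borel_measurable_const Phi0_measurable_fst)
  moreover have "\<bar>indicator \<Omega> x * f x\<bar> \<le> \<bar>C\<bar>" for x
  proof (cases "x \<in> \<Omega>")
    case True
    have "(\<lambda>m. \<bar>kernel_fun \<Phi> (s m) x\<bar>) \<longlonglongrightarrow> \<bar>f x\<bar>" by (intro tendsto_rabs lim True)
    then have "\<bar>f x\<bar> \<le> C" using C[OF True] by (intro LIMSEQ_le_const2) auto
    then show ?thesis using True by simp
  qed simp
  ultimately show ?thesis unfolding test_fun_def by auto
qed

text \<open>Dominated convergence applies because the native norm of a Cauchy sequence of kernel
  expansions bounds their supremum on \<open>\<Omega>\<close>.\<close>
lemma integral_native_space_eq_0:
  assumes g: "test_fun g" and potential: "\<And>y. y \<in> \<Omega> \<Longrightarrow> potential g y = 0"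
    and f: "f \<in> native_space \<Omega> \<Phi>"
  shows "(\<integral>x. g x * f x \<partial>lebesgue) = 0"
proof -
  obtain s C where s: "\<And>m. fin_coeff \<Omega> (s m)"
    and lim: "\<And>x. x \<in> \<Omega> \<Longrightarrow> (\<lambda>m. kernel_fun \<Phi> (s m) x) \<longlonglongrightarrow> f x"
    and C: "\<And>m x. x \<in> \<Omega> \<Longrightarrow> \<bar>kernel_fun \<Phi> (s m) x\<bar> \<le> C"
    using native_space_approx[OF f] by blast
  have g0: "g x = 0" if "x \<notin> \<Omega>" for x using g that unfolding test_fun_def by blast
  have gf: "g x * f x = g x * (indicator \<Omega> x * f x)" for x by (cases "x \<in> \<Omega>") (simp_all add: g0)
  have meas_gf: "(\<lambda>x. g x * f x) \<in> borel_measurable lebesgue"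
    using test_fun_times[OF g test_fun_native_space[OF f]] unfolding gf test_fun_def by blast
  have meas_m: "(\<lambda>x. g x * kernel_fun \<Phi> (s m) x) \<in> borel_measurable lebesgue" for m
    by (rule borel_measurable_integrable[OF integral_kernel_fun(1)[OF g s]])
  have "(\<lambda>m. \<integral>x. g x * kernel_fun \<Phi> (s m) x \<partial>lebesgue) \<longlonglongrightarrow> (\<integral>x. g x * f x \<partial>lebesgue)"
  proof (rule integral_dominated_convergence[OF meas_gf meas_m])
    show "integrable lebesgue (\<lambda>x. \<bar>g x\<bar> * C)"
      using test_fun_integrable[OF test_fun_abs[OF g]] by simp
    have "(\<lambda>m. g x * kernel_fun \<Phi> (s m) x) \<longlonglongrightarrow> g x * f x" for x
      by (cases "x \<in> \<Omega>") (simp_all add: g0 lim tendsto_mult_left)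
    then show "AE x in lebesgue. (\<lambda>m. g x * kernel_fun \<Phi> (s m) x) \<longlonglongrightarrow> g x * f x"
      by simp
    have "norm (g x * kernel_fun \<Phi> (s m) x) \<le> \<bar>g x\<bar> * C" for m x
      by (cases "x \<in> \<Omega>") (simp_all add: g0 abs_mult C mult_left_mono)
    then show "AE x in lebesgue. norm (g x * kernel_fun \<Phi> (s m) x) \<le> \<bar>g x\<bar> * C" for m
      by simp
  qed
  moreover have "(\<integral>x. g x * kernel_fun \<Phi> (s m) x \<partial>lebesgue) = 0" for m
    using potential s[of m] unfolding integral_kernel_fun(2)[OF g s] fin_coeff_def
    by (intro sum.neutral) auto
  ultimately show ?thesis by (simp add: LIMSEQ_const_iff)
qed

text \<open>Since \<open>g\<close> is orthogonal to the native space, \<open>\<integral> g\<^sup>2 \<le> \<integral> (g - f)\<^sup>2\<close> for every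
  \<open>f\<close> in it, and by density the right-hand side can be made arbitrarily small.\<close>
lemma ae_zero_if_kernel_form_eq_0:
  assumes g: "test_fun g" and "kernel_form g g = 0"
    and dense: "dense_in_L2 \<Omega> (native_space \<Omega> \<Phi>)"
  shows "AE x in lebesgue. x \<in> \<Omega> \<longrightarrow> g x = 0"
proof -
  have potential: "\<And>y. y \<in> \<Omega> \<Longrightarrow> potential g y = 0"
    by (rule potential_eq_0_if_kernel_form_eq_0[OF g \<open>kernel_form g g = 0\<close>])
  have g0: "g x = 0" if "x \<notin> \<Omega>" for x using g that unfolding test_fun_def by blast
  have gg: "integrable lebesgue (\<lambda>x. (g x)\<^sup>2)"
    using test_fun_integrable[OF test_fun_times[OF g g]] by (simp add: power2_eq_square)
  have "(\<integral>x. (g x)\<^sup>2 \<partial>lebesgue) \<le> 0 + \<epsilon>" if "\<epsilon> > 0" for \<epsilon>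
  proof -
    have "g \<in> borel_measurable lebesgue" using g unfolding test_fun_def by blast
    moreover have "(\<integral>\<^sup>+x\<in>\<Omega>. ennreal ((g x)\<^sup>2) \<partial>lebesgue) < \<infinity>"
      unfolding set_nn_integral_square_test_fun[OF g] by simp
    ultimately obtain f where f: "f \<in> native_space \<Omega> \<Phi>"
      and close: "(\<integral>\<^sup>+x\<in>\<Omega>. ennreal ((g x - f x)\<^sup>2) \<partial>lebesgue) < ennreal \<epsilon>"
      using dense \<open>\<epsilon> > 0\<close> unfolding dense_in_L2_def by blast
    define u where "u x = indicator \<Omega> x * f x" for x
    have u: "test_fun u" unfolding u_def by (rule test_fun_native_space[OF f])
    have d: "test_fun (\<lambda>x. g x - u x)" by (rule test_fun_diff[OF g u])
    have "(\<integral>\<^sup>+x\<in>\<Omega>. ennreal ((g x - f x)\<^sup>2) \<partial>lebesgue) = (\<integral>\<^sup>+x\<in>\<Omega>. ennreal ((g x - u x)\<^sup>2) \<partial>lebesgue)"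
      by (intro nn_integral_cong) (simp add: u_def indicator_def)
    with close have "(\<integral>x. (g x - u x)\<^sup>2 \<partial>lebesgue) < \<epsilon>"
      unfolding set_nn_integral_square_test_fun[OF d] by (simp add: ennreal_less_iff)
    moreover have "(\<integral>x. g x * u x \<partial>lebesgue) = 0"
    proof -
      have "g x * u x = g x * f x" for x by (cases "x \<in> \<Omega>") (simp_all add: u_def g0)
      then have "(\<lambda>x. g x * u x) = (\<lambda>x. g x * f x)" by (rule ext)
      then show ?thesis using integral_native_space_eq_0[OF g potential f] by simp
    qed
    ultimately show ?thesis using integral_square_le_if_orthogonal[OF g u] by simp
  qed
  then have "(\<integral>x. (g x)\<^sup>2 \<partial>lebesgue) \<le> 0" by (rule field_le_epsilon)
  moreover have "0 \<le> (\<integral>x. (g x)\<^sup>2 \<partial>lebesgue)" by (intro integral_nonneg_AE AE_I2) simp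
  ultimately have "(\<integral>x. (g x)\<^sup>2 \<partial>lebesgue) = 0" by (rule antisym)
  then have "AE x in lebesgue. (g x)\<^sup>2 = 0"
    using integral_nonneg_eq_0_iff_AE[OF gg] by simp
  then show ?thesis by eventually_elim simp
qed

lemma kernel_form_commute:
  assumes g: "test_fun g" and h: "test_fun h"
  shows "kernel_form g h = kernel_form h g"
proof -
  let ?F = "\<lambda>(x, y). g x * h y * Phi0 x y"
  have "kernel_form h g = (\<integral>(x, y). ?F (y, x) \<partial>(lebesgue \<Otimes>\<^sub>M lebesgue))"
    unfolding kernel_form_def using symmetric
    by (intro Bochner_Integration.integral_cong) (auto simp: Phi0_def)
  also have "\<dots> = kernel_form g h"
    unfolding kernel_form_def
    by (rule lebesgue_pair.integral_product_swap) (rule borel_measurable_integrable[OF integrable_kernel_form[OF g h]])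
  finally show ?thesis ..
qed

section \<open>The matrix K\<close>

lemma Kmat_eq_kernel_form:
  assumes "\<And>i. \<omega> i \<in> sets lebesgue" "\<And>i. \<omega> i \<subseteq> \<Omega>"
  shows "Kmat \<Phi> \<omega> $ i $ j = 1 / measure lebesgue (\<omega> i) * (1 / measure lebesgue (\<omega> j))
    * kernel_form (indicator (\<omega> i)) (indicator (\<omega> j))"
  unfolding Kmat_def using kernel_form_indicator[of "\<omega> i" "\<omega> j"] assms by simp

lemma Kmat_symmetric:
  assumes "\<And>i. \<omega> i \<in> sets lebesgue" "\<And>i. \<omega> i \<subseteq> \<Omega>"
  shows "transpose (Kmat \<Phi> \<omega>) = Kmat \<Phi> \<omega>"
  unfolding transpose_def vec_eq_iff Kmat_eq_kernel_form[OF assms]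
  using kernel_form_commute[OF test_fun_indicator test_fun_indicator] assms by simp

lemma Kmat_quadratic_form:
  fixes \<omega> :: "'n::finite \<Rightarrow> 'a set"
  assumes \<omega>: "\<And>i. \<omega> i \<in> sets lebesgue" "\<And>i. \<omega> i \<subseteq> \<Omega>"
  shows "v \<bullet> (Kmat \<Phi> \<omega> *v v) = kernel_form
    (\<lambda>x. \<Sum>i\<in>UNIV. v $ i / measure lebesgue (\<omega> i) * indicator (\<omega> i) x)
    (\<lambda>x. \<Sum>i\<in>UNIV. v $ i / measure lebesgue (\<omega> i) * indicator (\<omega> i) x)"
proof -
  define a where "a i = v $ i / measure lebesgue (\<omega> i)" for i
  have "v \<bullet> (Kmat \<Phi> \<omega> *v v)
      = (\<Sum>i\<in>UNIV. \<Sum>j\<in>UNIV. a i * a j * kernel_form (indicator (\<omega> i)) (indicator (\<omega> j)))"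
    unfolding inner_vec_def matrix_vector_mult_def Kmat_eq_kernel_form[OF \<omega>] a_def
    by (simp add: sum_distrib_left ac_simps)
  also have "\<dots> = kernel_form (\<lambda>x. \<Sum>i\<in>UNIV. a i * indicator (\<omega> i) x) (\<lambda>x. \<Sum>i\<in>UNIV. a i * indicator (\<omega> i) x)"
    by (rule kernel_form_sum[symmetric]) (simp_all add: test_fun_indicator \<omega>)
  finally show ?thesis unfolding a_def .
qed

lemma Kmat_pos_def:
  fixes \<omega> :: "'n::finite \<Rightarrow> 'a set"
  assumes \<omega>: "\<And>i. \<omega> i \<in> sets lebesgue" "\<And>i. \<omega> i \<subseteq> \<Omega>" "\<And>i. measure lebesgue (\<omega> i) > 0"
    and dense: "dense_in_L2 \<Omega> (native_space \<Omega> \<Phi>)" and indep: "indicators_lin_indep_L2 \<Omega> \<omega>"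
  shows "pos_def_matrix (Kmat \<Phi> \<omega>)"
  unfolding pos_def_matrix_def
proof (intro allI impI)
  fix v :: "real^'n" assume "v \<noteq> 0"
  define a where "a i = v $ i / measure lebesgue (\<omega> i)" for i
  define g where "g x = (\<Sum>i\<in>UNIV. a i * indicator (\<omega> i) x)" for x
  have g: "test_fun g" unfolding g_def
    by (intro test_fun_sum finite_class.finite_UNIV test_fun_cmult test_fun_indicator \<omega>)
  have "kernel_form g g \<noteq> 0"
  proof
    assume "kernel_form g g = 0"
    from ae_zero_if_kernel_form_eq_0[OF g this dense] have "\<forall>i. a i = 0"
      using indep unfolding indicators_lin_indep_L2_def g_def by blast
    then have "v $ i = 0" for i using \<omega>(3)[of i] unfolding a_def by force
    then have "v = 0" by (simp add: vec_eq_iff)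
    with \<open>v \<noteq> 0\<close> show False ..
  qed
  then show "0 < v \<bullet> (Kmat \<Phi> \<omega> *v v)"
    using kernel_form_nonneg[OF g] Kmat_quadratic_form[of \<omega> v, OF \<omega>(1) \<omega>(2)]
    unfolding g_def a_def by simp
qed

end

theorem theorem5p3:
  fixes \<Omega> :: "'a::euclidean_space set"
    and \<Phi> :: "'a \<Rightarrow> 'a \<Rightarrow> real"
    and \<omega> :: "'n::finite \<Rightarrow> 'a set"
  assumes "compact \<Omega>"
    and "continuous_on (\<Omega> \<times> \<Omega>) (\<lambda>(x, y). \<Phi> x y)"
    and "\<forall>x\<in>\<Omega>. \<forall>y\<in>\<Omega>. \<Phi> x y = \<Phi> y x"
    and "pd_kernel \<Omega> \<Phi>"
    and "dense_in_L2 \<Omega> (native_space \<Omega> \<Phi>)"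
    and "\<forall>i. \<omega> i \<in> sets lebesgue \<and> \<omega> i \<subseteq> \<Omega> \<and> measure lebesgue (\<omega> i) > 0"
    and "indicators_lin_indep_L2 \<Omega> \<omega>"
  shows "transpose (Kmat \<Phi> \<omega>) = Kmat \<Phi> \<omega> \<and> pos_def_matrix (Kmat \<Phi> \<omega>) \<and> invertible (Kmat \<Phi> \<omega>)"
proof -
  interpret continuous_pd_kernel \<Omega> \<Phi>
    using assms(1-4) by unfold_locales
  have \<omega>: "\<And>i. \<omega> i \<in> sets lebesgue" "\<And>i. \<omega> i \<subseteq> \<Omega>" "\<And>i. measure lebesgue (\<omega> i) > 0"
    using assms(6) by auto
  have "pos_def_matrix (Kmat \<Phi> \<omega>)"
    using \<omega> assms(5,7) by (rule Kmat_pos_def)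
  moreover have "transpose (Kmat \<Phi> \<omega>) = Kmat \<Phi> \<omega>"
    using \<omega>(1,2) by (rule Kmat_symmetric)
  ultimately show ?thesis using pos_def_matrix_invertible by blast
qed

end
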